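(* For every Hamming graph $H(d,q)$, the VC-dimension of the edge relation on $H(d,q)$ is at most $3$.
   Context: For $d,q\in\mathbb N$ and a set $S$ with $|S|=q$, the Hamming graph $H(d,q)$ has vertex set $S^d$, two vertices adjacent iff they agree in all but exactly one coordinate. The VC-dimension of the edge relation on a graph $G$ is the largest size of a set $A\subseteq V(G)$ such that $\{A\cap N(v)\mid v\in V(G)\}$ equals the power set of $A$, where $N(v)$ is the set of vertices adjacent to $v$. *)

theory Defs
  imports "HOL-Library.FuncSet"
begin

text \<open>Hamming graph H(d,q) over alphabet S (card S = q): vertices are the maps
  {0..<d} -> S (extensional), adjacent iff they differ in exactly one coordinate.\<close>

definition hamming_vertices :: "nat \<Rightarrow> 'a set \<Rightarrow> (nat \<Rightarrow> 'a) set" where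
  "hamming_vertices d S = PiE {..<d} (\<lambda>_. S)"

definition hamming_adj :: "nat \<Rightarrow> (nat \<Rightarrow> 'a) \<Rightarrow> (nat \<Rightarrow> 'a) \<Rightarrow> bool" where
  "hamming_adj d x y \<longleftrightarrow> card {i \<in> {..<d}. x i \<noteq> y i} = 1"

definition nbhd :: "'v set \<Rightarrow> ('v \<Rightarrow> 'v \<Rightarrow> bool) \<Rightarrow> 'v \<Rightarrow> 'v set" where
  "nbhd V adj v = {u \<in> V. adj v u}"

definition edge_shattered :: "'v set \<Rightarrow> ('v \<Rightarrow> 'v \<Rightarrow> bool) \<Rightarrow> 'v set \<Rightarrow> bool" where
  "edge_shattered V adj A \<longleftrightarrow> A \<subseteq> V \<and> (\<lambda>v. A \<inter> nbhd V adj v) ` V = Pow A"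

end

theory Submission
  imports Defs
begin

(* Suppose A has at least four elements and let v be a common neighbour of all of A, so that
   every a in A is v with a single coordinate changed. If all of A changes the same coordinate,
   A lies on a line through v; a common neighbour of two points of a line lies on that line and
   is therefore adjacent to all its other points, so no vertex sees exactly two points of A.
   Otherwise two points a, e of A change different coordinates; then a and e have only the two
   common neighbours v and v with both coordinates changed, whereas the vertices whose traces on
   A are {a, e}, {a, e, b} and {a, e, b, c} are three distinct common neighbours.
   An infinite shattered A would contain a shattered subset of size four. *)

lemma edge_shattered_subset:
  assumes "edge_shattered V adj A" and "B \<subseteq> A"
  shows "edge_shattered V adj B"
proof -
  have "(\<lambda>v. B \<inter> nbhd V adj v) ` V = Pow B"
  proof
    show "Pow B \<subseteq> (\<lambda>v. B \<inter> nbhd V adj v) ` V"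
    proof
      fix C assume "C \<in> Pow B"
      then have "C \<in> (\<lambda>v. A \<inter> nbhd V adj v) ` V"
        using assms unfolding edge_shattered_def by blast
      then obtain v where "v \<in> V" "C = A \<inter> nbhd V adj v" by blast
      moreover have "B \<inter> (A \<inter> nbhd V adj v) = C" using \<open>C \<in> Pow B\<close> calculation by blast
      ultimately show "C \<in> (\<lambda>v. B \<inter> nbhd V adj v) ` V" using assms(2) by blast
    qed
  qed blast
  moreover have "B \<subseteq> V" using assms unfolding edge_shattered_def by blast
  ultimately show ?thesis unfolding edge_shattered_def by blast
qed

lemma edge_shattered_realizer:
  assumes "edge_shattered V adj A" and "B \<subseteq> A"
  shows "\<exists>x\<in>V. \<forall>a\<in>A. adj x a \<longleftrightarrow> a \<in> B"
proof -
  have "B \<in> (\<lambda>v. A \<inter> nbhd V adj v) ` V"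
    using assms unfolding edge_shattered_def by blast
  with assms(1) show ?thesis
    unfolding edge_shattered_def nbhd_def by blast
qed

lemma edge_shattered_three_common_neighbours:
  assumes shattered: "edge_shattered V adj A"
    and "{a, e, b, c} \<subseteq> A" "b \<notin> {a, e}" "c \<notin> {a, e, b}"
  obtains x y z where "{x, y, z} \<subseteq> V" "\<forall>w\<in>{x, y, z}. adj w a \<and> adj w e"
    and "x \<noteq> y" "y \<noteq> z" "x \<noteq> z"
proof -
  obtain x where x: "x \<in> V" "\<forall>u\<in>A. adj x u \<longleftrightarrow> u \<in> {a, e}"
    using edge_shattered_realizer[OF shattered, of "{a, e}"] assms(2) by blast
  obtain y where y: "y \<in> V" "\<forall>u\<in>A. adj y u \<longleftrightarrow> u \<in> {a, e, b}"
    using edge_shattered_realizer[OF shattered, of "{a, e, b}"] assms(2) by blast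
  obtain z where z: "z \<in> V" "\<forall>u\<in>A. adj z u \<longleftrightarrow> u \<in> {a, e, b, c}"
    using edge_shattered_realizer[OF shattered, of "{a, e, b, c}"] assms(2) by blast
  show thesis
    by (rule that[of x y z]) (use x y z assms(2-) in auto)
qed

lemma hamming_adj_iff:
  "hamming_adj d x y \<longleftrightarrow> (\<exists>i<d. x i \<noteq> y i \<and> (\<forall>j<d. j \<noteq> i \<longrightarrow> x j = y j))"
proof -
  have "hamming_adj d x y \<longleftrightarrow> (\<exists>i. {j \<in> {..<d}. x j \<noteq> y j} = {i})"
    unfolding hamming_adj_def by (simp add: card_1_singleton_iff)
  also have "\<dots> \<longleftrightarrow> (\<exists>i<d. x i \<noteq> y i \<and> (\<forall>j<d. j \<noteq> i \<longrightarrow> x j = y j))"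
    by (auto simp: set_eq_iff)
  finally show ?thesis .
qed

lemma hamming_vertices_agree_outside:
  assumes "x \<in> hamming_vertices d S" "y \<in> hamming_vertices d S" "\<not> j < d"
  shows "x j = y j"
  using assms unfolding hamming_vertices_def by (metis PiE_arb lessThan_iff)

lemma hamming_adj_iff_fun_upd:
  assumes "x \<in> hamming_vertices d S" "y \<in> hamming_vertices d S"
  shows "hamming_adj d x y \<longleftrightarrow> (\<exists>i<d. y i \<noteq> x i \<and> y = x(i := y i))"
proof -
  have "y = x(i := y i) \<longleftrightarrow> (\<forall>j. j \<noteq> i \<longrightarrow> x j = y j)" for i
    by (auto simp: fun_eq_iff)
  also have "\<dots> i \<longleftrightarrow> (\<forall>j<d. j \<noteq> i \<longrightarrow> x j = y j)" for i
    using hamming_vertices_agree_outside[OF assms] by blast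
  finally show ?thesis
    unfolding hamming_adj_iff by auto
qed

lemma hamming_adj_fun_upd:
  assumes "i < d"
  shows "hamming_adj d x (x(i := s)) \<longleftrightarrow> s \<noteq> x i"
  using assms unfolding hamming_adj_iff by auto

lemma hamming_common_neighbours_at_distance_two:
  assumes V: "x \<in> hamming_vertices d S" "v \<in> hamming_vertices d S"
    and "i < d" "l < d" "i \<noteq> l" "\<alpha> \<noteq> v i" "\<beta> \<noteq> v l"
    and "hamming_adj d x (v(i := \<alpha>))" "hamming_adj d x (v(l := \<beta>))"
  shows "x = v \<or> x = v(i := \<alpha>, l := \<beta>)"
proof -
  have "(\<forall>j<d. x j = v j) \<or> (\<forall>j<d. x j = (v(i := \<alpha>, l := \<beta>)) j)"
    using assms(3-) unfolding hamming_adj_iff by (metis fun_upd_other fun_upd_same)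
  then show ?thesis
    using hamming_vertices_agree_outside[OF V] \<open>i < d\<close> \<open>l < d\<close>
    unfolding fun_eq_iff by (metis fun_upd_other)
qed

lemma hamming_common_neighbour_on_line:
  assumes V: "x \<in> hamming_vertices d S" "v \<in> hamming_vertices d S"
    and "i < d" "\<alpha> \<noteq> \<beta>"
    and "hamming_adj d x (v(i := \<alpha>))" "hamming_adj d x (v(i := \<beta>))"
  shows "x = v(i := x i)"
proof -
  have "\<forall>j<d. j \<noteq> i \<longrightarrow> x j = v j"
    using assms(3-) unfolding hamming_adj_iff by (metis fun_upd_other fun_upd_same)
  then show ?thesis
    using hamming_vertices_agree_outside[OF V] by (auto simp: fun_eq_iff)
qed

lemma hamming_edge_shattered_on_line_card_le_3:
  assumes shattered: "edge_shattered (hamming_vertices d S) (hamming_adj d) A" and "finite A"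
    and v: "v \<in> hamming_vertices d S" and "i < d" and on_line: "\<forall>c\<in>A. c = v(i := c i)"
  shows "card A \<le> 3"
proof (cases "card A \<le> 1")
  case False
  then obtain a b where ab: "a \<in> A" "b \<in> A" "a \<noteq> b"
    using card_le_Suc0_iff_eq[OF \<open>finite A\<close>] by auto
  obtain x where x: "x \<in> hamming_vertices d S" "\<forall>c\<in>A. hamming_adj d x c \<longleftrightarrow> c \<in> {a, b}"
    using edge_shattered_realizer[OF shattered, of "{a, b}"] ab by blast
  have "a = v(i := a i)" "b = v(i := b i)"
    using on_line ab by blast+
  then have "a i \<noteq> b i" and "hamming_adj d x (v(i := a i))" "hamming_adj d x (v(i := b i))"
    using ab x by (metis, simp_all)
  then have "x = v(i := x i)"
    using hamming_common_neighbour_on_line[OF x(1) v \<open>i < d\<close>] by blast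
  have "A \<subseteq> {x, a, b}"
  proof
    fix c assume "c \<in> A"
    show "c \<in> {x, a, b}"
    proof (cases "c i = x i")
      case True
      then show ?thesis
        using on_line \<open>c \<in> A\<close> \<open>x = v(i := x i)\<close> by (metis insertI1)
    next
      case False
      have "c = x(i := c i)"
        using on_line \<open>c \<in> A\<close> \<open>x = v(i := x i)\<close> by (metis fun_upd_upd)
      then have "hamming_adj d x c"
        using hamming_adj_fun_upd[OF \<open>i < d\<close>] False by metis
      then show ?thesis
        using x \<open>c \<in> A\<close> by blast
    qed
  qed
  then have "card A \<le> card {x, a, b}"
    by (intro card_mono) auto
  also have "\<dots> \<le> 3"
    by (auto simp: card_insert_le_m1)
  finally show ?thesis .
qed simp

lemma hamming_edge_shattered_card_le_3:
  assumes shattered: "edge_shattered (hamming_vertices d S) (hamming_adj d) A" and "finite A"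
  shows "card A \<le> 3"
proof (rule ccontr)
  assume "\<not> card A \<le> 3"
  then have element_outside: "\<exists>b\<in>A. b \<notin> F" if "finite F" "card F \<le> 3" for F
    using that card_mono[of F A] by fastforce
  obtain v where v: "v \<in> hamming_vertices d S" "\<forall>c\<in>A. hamming_adj d v c"
    using edge_shattered_realizer[OF shattered, of A] by blast
  have "A \<subseteq> hamming_vertices d S"
    using shattered unfolding edge_shattered_def by blast
  then have differs_once: "\<exists>i<d. c i \<noteq> v i \<and> c = v(i := c i)" if "c \<in> A" for c
    using v that hamming_adj_iff_fun_upd by blast
  obtain a where "a \<in> A"
    using element_outside[of "{}"] by auto
  then obtain i where i: "i < d" "a i \<noteq> v i" "a = v(i := a i)"
    using differs_once by blast
  have "\<not> (\<forall>c\<in>A. c = v(i := c i))"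
    using hamming_edge_shattered_on_line_card_le_3[OF shattered \<open>finite A\<close> v(1) i(1)]
      \<open>\<not> card A \<le> 3\<close> by blast
  then obtain e where "e \<in> A" "e \<noteq> v(i := e i)" by blast
  then obtain l where l: "l < d" "e l \<noteq> v l" "e = v(l := e l)" "l \<noteq> i"
    using differs_once by blast
  obtain b where b: "b \<in> A" "b \<notin> {a, e}"
    using element_outside[of "{a, e}"] by (auto simp: card_insert_le_m1)
  obtain c where c: "c \<in> A" "c \<notin> {a, e, b}"
    using element_outside[of "{a, e, b}"] by (auto simp: card_insert_le_m1)
  obtain x y z where xyz: "{x, y, z} \<subseteq> hamming_vertices d S"
    "\<forall>w\<in>{x, y, z}. hamming_adj d w a \<and> hamming_adj d w e" "x \<noteq> y" "y \<noteq> z" "x \<noteq> z"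
    using edge_shattered_three_common_neighbours[OF shattered _ b(2) c(2)] \<open>a \<in> A\<close> \<open>e \<in> A\<close> b c
    by blast
  have "w = v \<or> w = v(i := a i, l := e l)" if "w \<in> {x, y, z}" for w
    using hamming_common_neighbours_at_distance_two[OF _ v(1) i(1) l(1) l(4)[symmetric] i(2) l(2)]
      that xyz(1,2) i(3) l(3) by (metis subsetD)
  then show False
    using xyz(3-) by blast
qed

lemma hamming_edge_shattered_finite:
  assumes "edge_shattered (hamming_vertices d S) (hamming_adj d) A"
  shows "finite A"
proof (rule ccontr)
  assume "infinite A"
  then obtain B where "finite B" "card B = 4" "B \<subseteq> A"
    using infinite_arbitrarily_large by blast
  moreover have "card B \<le> 3"
    using hamming_edge_shattered_card_le_3 edge_shattered_subset assms calculation by blast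
  ultimately show False by simp
qed

theorem mainTheorem16:
  fixes S :: "'a set" and d q :: nat and A :: "(nat \<Rightarrow> 'a) set"
  assumes "finite S" and "card S = q"
    and "edge_shattered (hamming_vertices d S) (hamming_adj d) A"
  shows "finite A \<and> card A \<le> 3"
  using hamming_edge_shattered_finite[OF assms(3)] hamming_edge_shattered_card_le_3[OF assms(3)]
  by blast

end
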